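(* For all integers $k$ and $m$ with $k \geq m \geq 0$, \[ \sum_{n=0}^{m} \binom{m}{n} \binom{k+n}{m} \binom{k+m+n}{m+n}^{-1} \frac{2n + k + 1}{m + n + k + 1} = 1 . \]
   Context: $\binom{a}{b}$ denotes the usual binomial coefficient $\frac{a!}{b!\,(a-b)!}$ for integers $0\le b\le a$. *)

theory Defs
  imports Complex_Main
begin

end

theory Submission
  imports Defs
begin

text \<open>
  A Wilf-Zeilberger proof. Let \<open>F m n\<close> be the summand and
  \<open>G m n = -2 n C(m+1,n) C(k+n,m+1) / (C(k+m+n,m+n) (k+m+n+1))\<close>.
  Then \<open>F (m+1) n - F m n = G m (n+1) - G m n\<close>: writing every binomial coefficient
  as a rational multiple of \<open>C(m+1,n)\<close>, \<open>C(k+n,m)\<close> or \<open>C(k+m+n,m+n)\<close>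
  turns this into a polynomial identity in \<open>k, m, n\<close>. Summing over \<open>n\<close> telescopes,
  since \<open>G m 0 = G m (m+2) = 0\<close>, so the sum does not depend on \<open>m\<close>; for \<open>m = 0\<close>
  it is \<open>1\<close>. The argument never uses \<open>m \<le> k\<close>.
\<close>

lemma of_nat_choose_Suc_right:
  "of_nat (x choose Suc j) * (of_nat j + 1)
    = of_nat (x choose j) * (of_nat x - of_nat j :: 'a::field_char_0)"
  using gbinomial_mult_1[of "of_nat x :: 'a" j] by (simp add: binomial_gbinomial algebra_simps)

lemma of_nat_choose_Suc_left:
  "of_nat (m choose n) * (of_nat m + 1)
    = of_nat (Suc m choose n) * (of_nat m + 1 - of_nat n :: 'a::field_char_0)"
  using gbinomial_absorb_comp[of "of_nat m + 1 :: 'a" n]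
  by (simp add: binomial_gbinomial algebra_simps)

lemma of_nat_choose_Suc_Suc:
  "of_nat (Suc x choose Suc j) * (of_nat j + 1)
    = of_nat (x choose j) * (of_nat x + 1 :: 'a::field_char_0)"
  using arg_cong[OF Suc_times_binomial_eq[of x j], of "of_nat :: nat \<Rightarrow> 'a"]
  by (simp add: algebra_simps del: binomial_Suc_Suc)

definition summand :: "nat \<Rightarrow> nat \<Rightarrow> nat \<Rightarrow> real" where
  "summand k m n = real (m choose n) * real ((k + n) choose m)
     / real ((k + m + n) choose (m + n)) * (real (2 * n + k + 1) / real (m + n + k + 1))"

definition certificate :: "nat \<Rightarrow> nat \<Rightarrow> nat \<Rightarrow> real" where
  "certificate k m n = - 2 * real n * real (Suc m choose n) * real ((k + n) choose Suc m)
     / (real ((k + m + n) choose (m + n)) * real (k + m + n + 1))"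

lemma certificate_polynomial_identity:
  fixes x y z :: "'a::comm_ring_1"
  shows "(x + z - y) * (y + z + 1) * (2 * z + x + 1) - (y + 1 - z) * (2 * z + x + 1) * (x + y + z + 2)
    = - 2 * (y + 1 - z) * (x + z + 1) * (y + z + 1) - - 2 * z * (x + z - y) * (x + y + z + 2)"
  by (simp add: algebra_simps)

lemma summand_Suc_diff:
  "summand k (Suc m) n - summand k m n = certificate k m (Suc n) - certificate k m n"
proof -
  define x y z where "x = real k" and "y = real m" and "z = real n"
  define a b c where "a = real (Suc m choose n)" and "b = real ((k + n) choose m)"
    and "c = real ((k + m + n) choose (m + n))"
  define d where "d = (y + 1) * (x + y + z + 1) * (x + y + z + 2)"
  have pos: "c > 0" "y + 1 > 0" "x + y + z + 1 > 0" "x + y + z + 2 > 0" "y + z + 1 > 0" "z + 1 > 0"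
    unfolding x_def y_def z_def c_def by simp_all
  have of_nat_eqs: "real (Suc n) = z + 1" "real (2 * n + k + 1) = 2 * z + x + 1"
    "real (m + n + k + 1) = x + y + z + 1" "real (Suc m + n + k + 1) = x + y + z + 2"
    "real (k + m + n + 1) = x + y + z + 1" "real (k + m + Suc n + 1) = x + y + z + 2"
    unfolding x_def y_def z_def by simp_all
  have a_m: "real (m choose n) = a * (y + 1 - z) / (y + 1)"
    using of_nat_choose_Suc_left[of m n] unfolding a_def y_def z_def by (simp add: field_simps)
  have a_Suc: "real (Suc m choose Suc n) = a * (y + 1 - z) / (z + 1)"
    using of_nat_choose_Suc_right[of "Suc m" n] unfolding a_def y_def z_def
    by (simp add: field_simps del: binomial_Suc_Suc)
  have b_Suc: "real ((k + n) choose Suc m) = b * (x + z - y) / (y + 1)"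
    using of_nat_choose_Suc_right[of "k + n" m] unfolding b_def x_def y_def z_def
    by (simp add: field_simps)
  have b_Suc_Suc: "real ((k + Suc n) choose Suc m) = b * (x + z + 1) / (y + 1)"
    using of_nat_choose_Suc_Suc[of "k + n" m] unfolding b_def x_def y_def z_def
    by (simp add: field_simps del: binomial_Suc_Suc)
  have c_Suc_Suc: "real ((k + Suc m + n) choose (Suc m + n)) = c * (x + y + z + 1) / (y + z + 1)"
    "real ((k + m + Suc n) choose (m + Suc n)) = c * (x + y + z + 1) / (y + z + 1)"
    using of_nat_choose_Suc_Suc[of "k + m + n" "m + n"] unfolding c_def x_def y_def z_def
    by (simp_all add: field_simps del: binomial_Suc_Suc)
  have "summand k m n = a * b / (c * d) * ((y + 1 - z) * (2 * z + x + 1) * (x + y + z + 2))"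
    unfolding summand_def a_m b_def[symmetric] c_def[symmetric] of_nat_eqs d_def
    using pos by (simp add: divide_simps)
  moreover have "summand k (Suc m) n
      = a * b / (c * d) * ((x + z - y) * (y + z + 1) * (2 * z + x + 1))"
    unfolding summand_def a_def[symmetric] b_Suc c_Suc_Suc of_nat_eqs d_def
    using pos by (simp add: divide_simps)
  moreover have "certificate k m n = a * b / (c * d) * (- 2 * z * (x + z - y) * (x + y + z + 2))"
    unfolding certificate_def a_def[symmetric] b_Suc c_def[symmetric] z_def[symmetric] of_nat_eqs
      d_def
    using pos by (simp add: divide_simps)
  moreover have "certificate k m (Suc n)
      = a * b / (c * d) * (- 2 * (y + 1 - z) * (x + z + 1) * (y + z + 1))"
    unfolding certificate_def a_Suc b_Suc_Suc c_Suc_Suc of_nat_eqs d_def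
    using pos by (simp add: divide_simps) (simp add: algebra_simps)
  ultimately show ?thesis
    by (simp only: certificate_polynomial_identity flip: right_diff_distrib)
qed

lemma sum_summand: "(\<Sum>n = 0..m. summand k m n) = 1"
proof (induction m)
  case 0
  then show ?case
    unfolding summand_def by simp
next
  case (Suc m)
  have "summand k m (Suc m) = 0"
    unfolding summand_def by simp
  with Suc.IH have "(\<Sum>n = 0..Suc m. summand k m n) = 1"
    by simp
  moreover have "(\<Sum>n = 0..Suc m. summand k (Suc m) n - summand k m n)
      = certificate k m (Suc (Suc m)) - certificate k m 0"
    unfolding summand_Suc_diff by (rule sum_Suc_diff) simp
  moreover have "certificate k m (Suc (Suc m)) = 0" "certificate k m 0 = 0"
    unfolding certificate_def by (simp_all del: binomial_Suc_Suc)
  ultimately show ?case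
    by (simp add: sum_subtractf)
qed

theorem mainTheorem1:
  fixes k m :: nat
  assumes "m \<le> k"
  shows "(\<Sum>n = 0..m. real (m choose n) * real ((k + n) choose m)
            / real ((k + m + n) choose (m + n))
            * (real (2 * n + k + 1) / real (m + n + k + 1))) = 1"
  using sum_summand[of k m] unfolding summand_def .

end
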